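(* Let $\Phi$ be a real $N\times d$ matrix satisfying the Restricted Isometry Condition with parameters $(2n,\varepsilon)$, $\varepsilon = 0.03/\sqrt{\log n}$, let $v \ne 0$ be $n$-sparse, $x = \Phi v$, and consider an iteration of ROMP run on $x$ with sparsity level $n$, with $I$ the index set and $r\ne 0$ the residual at the start of that iteration. Let $v_0 = v|_{\mathrm{supp}(v)\setminus I}$ (equal to $v$ on $\mathrm{supp}(v)\setminus I$, $0$ elsewhere), $x_0 = \Phi v_0$, $u_0 = \Phi^* x_0$ and $u = \Phi^* r$. Then for every set $T \subset \{1,\dots,d\}$ with $|T|\le 2n$, $\|(u_0 - u)|_T\|_2 \le 2.4\,\varepsilon\,\|v_0\|_2$.
   Context: A vector is $n$-sparse if it has at most $n$ nonzero coordinates. $\Phi$ satisfies the Restricted Isometry Condition with parameters $(m,\varepsilon)$ if $(1-\varepsilon)\|w\|_2 \le \|\Phi w\|_2 \le (1+\varepsilon)\|w\|_2$ for all $m$-sparse $w$. $y|_T$ is the restriction of $y$ to coordinates in $T$. ROMP with input $x$ and sparsity level $n$: Initialize $I=\emptyset$, $r=x$. Repeat until $r=0$: (Identify) $u=\Phi^*r$, choose a set $J$ of the $n$ biggest coordinates of $u$ in magnitude, or all nonzero coordinates of $u$, whichever set is smaller; (Regularize) among subsets $J_0\subset J$ with $|u(i)|\le 2|u(j)|$ for all $i,j\in J_0$, choose one maximizing $\|u|_{J_0}\|_2$; (Update) $I\leftarrow I\cup J_0$, $y=\operatorname{argmin}_{z\in\mathbb{R}^I}\|x-\Phi z\|_2$,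 $r=x-\Phi y$. Output $I$. *)

theory Defs
  imports "HOL-Analysis.Analysis"
begin

text \<open>Vectors in R^d are modelled as real^'d, an N x d matrix as real^'d^'N.
  Coordinates are indexed by the finite type 'd (playing the role of {1..d}).\<close>

definition support :: "real^'d \<Rightarrow> 'd set" where
  "support w = {i. w $ i \<noteq> 0}"

definition sparse :: "nat \<Rightarrow> real^'d \<Rightarrow> bool" where
  "sparse m w \<longleftrightarrow> card (support w) \<le> m"

definition restr :: "'d set \<Rightarrow> real^'d \<Rightarrow> real^'d" where
  "restr T y = (\<chi> i. if i \<in> T then y $ i else 0)"

definition RIC :: "real^'d^'N \<Rightarrow> nat \<Rightarrow> real \<Rightarrow> bool" where
  "RIC Phi m eps \<longleftrightarrow> (\<forall>w. sparse m w \<longrightarrow>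
      (1 - eps) * norm w \<le> norm (Phi *v w) \<and> norm (Phi *v w) \<le> (1 + eps) * norm w)"

text \<open>Identify step: J is a set of the n biggest coordinates of u in magnitude,
  or all nonzero coordinates of u, whichever set is smaller (ties broken arbitrarily).\<close>
definition identify_ok :: "nat \<Rightarrow> real^'d \<Rightarrow> 'd set \<Rightarrow> bool" where
  "identify_ok n u J \<longleftrightarrow> J \<subseteq> support u \<and> card J = min n (card (support u)) \<and>
      (\<forall>i\<in>J. \<forall>j. j \<notin> J \<longrightarrow> \<bar>u $ j\<bar> \<le> \<bar>u $ i\<bar>)"

definition comparable :: "real^'d \<Rightarrow> 'd set \<Rightarrow> bool" where
  "comparable u J0 \<longleftrightarrow> (\<forall>i\<in>J0. \<forall>j\<in>J0. \<bar>u $ i\<bar> \<le> 2 * \<bar>u $ j\<bar>)"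

definition regularize_ok :: "real^'d \<Rightarrow> 'd set \<Rightarrow> 'd set \<Rightarrow> bool" where
  "regularize_ok u J J0 \<longleftrightarrow> J0 \<subseteq> J \<and> comparable u J0 \<and>
      (\<forall>J1. J1 \<subseteq> J \<longrightarrow> comparable u J1 \<longrightarrow> norm (restr J1 u) \<le> norm (restr J0 u))"

definition lsq_min :: "real^'d^'N \<Rightarrow> real^'N \<Rightarrow> 'd set \<Rightarrow> real^'d \<Rightarrow> bool" where
  "lsq_min Phi x I y \<longleftrightarrow> support y \<subseteq> I \<and>
      (\<forall>z. support z \<subseteq> I \<longrightarrow> norm (x - Phi *v y) \<le> norm (x - Phi *v z))"

definition romp_step :: "real^'d^'N \<Rightarrow> nat \<Rightarrow> real^'N \<Rightarrow> ('d set \<times> (real^'N)) \<Rightarrow> ('d set \<times> (real^'N)) \<Rightarrow> bool" where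
  "romp_step Phi n x s s' \<longleftrightarrow> snd s \<noteq> 0 \<and>
     (let u = transpose Phi *v snd s in
      \<exists>J J0 y. identify_ok n u J \<and> regularize_ok u J J0 \<and>
        fst s' = fst s \<union> J0 \<and> lsq_min Phi x (fst s') y \<and> snd s' = x - Phi *v y)"

inductive romp_reach :: "real^'d^'N \<Rightarrow> nat \<Rightarrow> real^'N \<Rightarrow> ('d set \<times> (real^'N)) \<Rightarrow> bool"
  for Phi n x where
  init: "romp_reach Phi n x ({}, x)"
| step: "romp_reach Phi n x s \<Longrightarrow> romp_step Phi n x s s' \<Longrightarrow> romp_reach Phi n x s'"

end

theory Submission
  imports Defs
begin

text \<open>The least-squares residual \<open>r = x - \<Phi> y\<close> is orthogonal to \<open>\<Phi> z\<close> for every \<open>z\<close>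
  supported in \<open>I\<close>. Hence \<open>\<Phi> v\<^sub>0 - r = \<Phi> y'\<close> with \<open>y'\<close> supported in \<open>I\<close>, and near-orthogonality
  of disjointly supported sparse vectors under the RIC gives
  \<open>(1 - \<epsilon>) \<parallel>\<Phi> v\<^sub>0 - r\<parallel> \<le> 2 \<epsilon> \<parallel>v\<^sub>0\<parallel>\<close>; applying \<open>\<Phi>\<^sup>*\<close> and restricting to at most \<open>2n\<close>
  coordinates costs a further factor \<open>1 + \<epsilon>\<close>. All of this needs \<open>|I \<union> supp v| \<le> 2n\<close>, which
  follows from the invariant that at least half of the indices chosen by ROMP lie in \<open>supp v\<close>.
  The invariant survives an iteration because the identified set captures at least
  \<open>(1 - 4.16 \<epsilon>)\<^sup>2 \<parallel>v\<^sub>0\<parallel>\<^sup>2\<close> of the energy of \<open>u\<close>, regularization keeps a \<open>1/O(log n)\<close>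
  fraction of it, and coordinates outside \<open>supp v\<close> carry only \<open>O(\<epsilon>\<^sup>2 \<parallel>v\<^sub>0\<parallel>\<^sup>2)\<close> energy; since
  the coordinates of a comparable set have equal energy up to a factor 4, with
  \<open>\<epsilon> = 0.03/\<surd>log n\<close> those outside coordinates cannot form the majority of the chosen set.\<close>

subsection \<open>Restricted isometries and least squares\<close>

lemma support_add_subset: "support (a + b) \<subseteq> support a \<union> support b"
  by (auto simp: support_def)

lemma support_diff_subset: "support (a - b) \<subseteq> support a \<union> support b"
  by (auto simp: support_def)

lemma support_scaleR_subset: "support (c *\<^sub>R a) \<subseteq> support a"
  by (auto simp: support_def)

lemma support_restr_subset: "support (restr T a) \<subseteq> T"
  by (auto simp: support_def restr_def)

lemma sparse_if_support_subset: "support a \<subseteq> S \<Longrightarrow> card S \<le> m \<Longrightarrow> sparse m a"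
  unfolding sparse_def by (meson card_mono dual_order.trans finite)

lemma inner_eq_0_if_disjoint_support: "support a \<inter> support b = {} \<Longrightarrow> inner a b = 0"
  unfolding inner_vec_def support_def by (rule sum.neutral) auto

lemma restr_diff: "restr T (a - b) = restr T a - restr T b"
  by (simp add: restr_def vec_eq_iff)

lemma restr_Diff_add_restr: "restr (support v - I) v + restr I v = v"
  by (simp add: restr_def support_def vec_eq_iff)

lemma inner_restr_left: "support z \<subseteq> T \<Longrightarrow> inner (restr T a) z = inner a z"
  unfolding inner_vec_def restr_def support_def by (rule sum.cong) auto

lemma norm_restr_power2: "norm (restr T a)^2 = (\<Sum>i\<in>T. (a$i)^2)"
proof -
  have "norm (restr T a)^2 = inner (restr T a) (restr T a)" by (simp add: dot_square_norm)
  also have "\<dots> = (\<Sum>i\<in>UNIV. if i \<in> T then (a$i)^2 else 0)"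
    by (simp add: inner_vec_def restr_def power2_eq_square if_distrib cong: if_cong)
  also have "\<dots> = (\<Sum>i\<in>T. (a$i)^2)" by (simp add: sum.If_cases)
  finally show ?thesis .
qed

lemma inner_transpose_mult_vec: "inner (transpose (A::real^'n^'m) *v w) z = inner w (A *v z)"
  by (simp add: dot_lmul_matrix)

lemma le_if_mult_self_le:
  fixes x c :: real
  assumes "x * x \<le> x * c" and "0 \<le> c"
  shows "x \<le> c"
  using assms by (cases "x > 0") (auto simp: mult_le_cancel_left)

lemma RIC_power2_bounds:
  assumes "RIC Phi m e" and "sparse m w" and "0 \<le> e" and "e \<le> 1"
  shows "(1-e)^2 * norm w^2 \<le> norm (Phi *v w)^2" and "norm (Phi *v w)^2 \<le> (1+e)^2 * norm w^2"
  using assms unfolding RIC_def power_mult_distrib[symmetric]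
  by (auto intro!: power_mono)

lemma RIC_inner_disjoint_le:
  fixes Phi :: "real^'d^'N"
  assumes ric: "RIC Phi m e" and e: "0 \<le> e" "e \<le> 1"
    and disj: "support a \<inter> support b = {}" and card: "card (support a \<union> support b) \<le> m"
  shows "\<bar>inner (Phi *v a) (Phi *v b)\<bar> \<le> 2 * e * norm a * norm b"
proof (cases "a = 0 \<or> b = 0")
  case True
  then show ?thesis by auto
next
  case False
  define \<alpha> where "\<alpha> = norm a"
  define \<beta> where "\<beta> = norm b"
  have pos: "0 < 4 * \<alpha> * \<beta>" using False by (simp add: \<alpha>_def \<beta>_def)
  \<comment> \<open>polarization with rescaled vectors of equal norm, both \<open>m\<close>-sparse\<close>
  define x where "x = \<beta> *\<^sub>R a + \<alpha> *\<^sub>R b"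
  define y where "y = \<beta> *\<^sub>R a - \<alpha> *\<^sub>R b"
  have ab: "inner a b = 0" using disj by (rule inner_eq_0_if_disjoint_support)
  have aa: "inner a a = \<alpha>^2" "inner b b = \<beta>^2"
    by (simp_all add: \<alpha>_def \<beta>_def power2_norm_eq_inner)
  have "norm x^2 = 2 * \<alpha>^2 * \<beta>^2" "norm y^2 = 2 * \<alpha>^2 * \<beta>^2"
    unfolding x_def y_def power2_norm_eq_inner using ab aa
    by (simp_all add: inner_add_left inner_add_right inner_diff_left inner_diff_right
        inner_commute algebra_simps power2_eq_square)
  moreover have "sparse m x" "sparse m y" unfolding x_def y_def
    by (rule sparse_if_support_subset[OF _ card],
        meson order_trans support_add_subset support_diff_subset support_scaleR_subset Un_mono)+
  ultimately have bounds:
    "(1-e)^2 * (2 * \<alpha>^2 * \<beta>^2) \<le> norm (Phi *v w)^2 \<and>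
     norm (Phi *v w)^2 \<le> (1+e)^2 * (2 * \<alpha>^2 * \<beta>^2)" if "w = x \<or> w = y" for w
    using that RIC_power2_bounds[OF ric _ e, of w] by auto
  have "norm (Phi *v x)^2 - norm (Phi *v y)^2 = 4 * \<alpha> * \<beta> * inner (Phi *v a) (Phi *v b)"
    unfolding x_def y_def power2_norm_eq_inner
    by (simp add: matrix_vector_right_distrib matrix_vector_mult_diff_distrib
        matrix_vector_mult_scaleR inner_add_left inner_add_right inner_diff_left
        inner_diff_right inner_commute algebra_simps)
  then have "4 * \<alpha> * \<beta> * \<bar>inner (Phi *v a) (Phi *v b)\<bar> = \<bar>norm (Phi *v x)^2 - norm (Phi *v y)^2\<bar>"
    using pos by (simp add: abs_mult \<alpha>_def \<beta>_def)
  also have "\<dots> \<le> (1+e)^2 * (2 * \<alpha>^2 * \<beta>^2) - (1-e)^2 * (2 * \<alpha>^2 * \<beta>^2)"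
    using bounds[of x] bounds[of y] by (auto simp: abs_le_iff)
  also have "\<dots> = 4 * \<alpha> * \<beta> * (2 * e * \<alpha> * \<beta>)"
    by (simp add: power2_eq_square algebra_simps)
  finally have "4 * \<alpha> * \<beta> * \<bar>inner (Phi *v a) (Phi *v b)\<bar> \<le> 4 * \<alpha> * \<beta> * (2 * e * \<alpha> * \<beta>)" .
  then have "\<bar>inner (Phi *v a) (Phi *v b)\<bar> \<le> 2 * e * \<alpha> * \<beta>"
    using pos by (rule mult_left_le_imp_le)
  then show ?thesis by (simp add: \<alpha>_def \<beta>_def)
qed

lemma lsq_min_residual_orthogonal:
  fixes Phi :: "real^'d^'N"
  assumes lsq: "lsq_min Phi x I y" and z: "support z \<subseteq> I"
  shows "inner (x - Phi *v y) (Phi *v z) = 0"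
proof -
  define r where "r = x - Phi *v y"
  define w where "w = Phi *v z"
  \<comment> \<open>moving \<open>y\<close> by \<open>t z\<close> with this \<open>t\<close> would lower the residual by \<open>(\<parallel>w\<parallel>\<^sup>2 + 2) t\<^sup>2\<close>\<close>
  define t where "t = inner r w / (inner w w + 1)"
  have "support (y + t *\<^sub>R z) \<subseteq> I"
    using lsq z support_add_subset[of y "t *\<^sub>R z"] support_scaleR_subset[of t z]
    unfolding lsq_min_def by blast
  then have "norm r \<le> norm (x - Phi *v (y + t *\<^sub>R z))"
    using lsq unfolding lsq_min_def r_def by blast
  also have "x - Phi *v (y + t *\<^sub>R z) = r - t *\<^sub>R w"
    by (simp add: r_def w_def matrix_vector_right_distrib matrix_vector_mult_scaleR)
  finally have "inner r r \<le> inner (r - t *\<^sub>R w) (r - t *\<^sub>R w)"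
    by (simp add: power_mono flip: power2_norm_eq_inner)
  then have "0 \<le> t * t * inner w w - 2 * t * inner r w"
    by (simp add: inner_diff_left inner_diff_right inner_commute algebra_simps)
  also have "\<dots> = - ((inner w w + 2) * (t * t))"
    by (simp add: t_def field_simps add_nonneg_eq_0_iff)
  finally have "t = 0"
    by (smt (verit) inner_ge_zero mult_nonneg_nonneg zero_le_square mult_eq_0_iff)
  then show ?thesis
    by (simp add: t_def r_def w_def add_nonneg_eq_0_iff)
qed

lemma lsq_min_empty: "lsq_min Phi x {} 0"
proof -
  have "z = 0" if "support z \<subseteq> {}" for z :: "real^'d"
    using that by (auto simp: support_def vec_eq_iff)
  moreover have "support (0::real^'d) \<subseteq> {}" by (simp add: support_def)
  ultimately show ?thesis unfolding lsq_min_def by fastforce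
qed

lemma transpose_residual_eq_0:
  fixes Phi :: "real^'d^'N"
  assumes "lsq_min Phi x I y" and "i \<in> I"
  shows "(transpose Phi *v (x - Phi *v y)) $ i = 0"
proof -
  have "support (axis i (1::real)) \<subseteq> I" using assms(2) by (auto simp: support_def axis_def)
  then have "inner (x - Phi *v y) (Phi *v axis i 1) = 0"
    by (rule lsq_min_residual_orthogonal[OF assms(1)])
  then show ?thesis by (simp add: inner_transpose_mult_vec[symmetric] inner_axis)
qed

lemma norm_restr_transpose_power2:
  fixes Phi :: "real^'d^'N"
  shows "norm (restr T (transpose Phi *v w))^2 = inner w (Phi *v restr T (transpose Phi *v w))"
  by (simp add: power2_norm_eq_inner inner_restr_left[OF support_restr_subset]
      flip: inner_transpose_mult_vec)

lemma RIC_norm_restr_transpose_le: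
  fixes Phi :: "real^'d^'N"
  assumes ric: "RIC Phi m e" and T: "card T \<le> m" and e: "0 \<le> e"
  shows "norm (restr T (transpose Phi *v w)) \<le> (1+e) * norm w"
proof -
  define z where "z = restr T (transpose Phi *v w)"
  have "norm (Phi *v z) \<le> (1+e) * norm z"
    using ric sparse_if_support_subset[OF support_restr_subset T] unfolding RIC_def z_def by blast
  have "norm z * norm z = inner w (Phi *v z)"
    unfolding z_def power2_eq_square[symmetric] by (rule norm_restr_transpose_power2)
  also have "\<dots> \<le> norm w * norm (Phi *v z)" by (rule norm_cauchy_schwarz)
  also have "\<dots> \<le> norm w * ((1+e) * norm z)" by (rule mult_left_mono) (fact, simp)
  also have "\<dots> = norm z * ((1+e) * norm w)" by (simp only: mult_ac)
  finally have "norm z * norm z \<le> norm z * ((1+e) * norm w)" .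
  then have "norm z \<le> (1+e) * norm w" by (rule le_if_mult_self_le) (use e in simp)
  then show ?thesis unfolding z_def .
qed

lemma RIC_norm_restr_transpose_disjoint_le:
  fixes Phi :: "real^'d^'N"
  assumes ric: "RIC Phi m e" and e: "0 \<le> e" "e \<le> 1"
    and disj: "T \<inter> support a = {}" and card: "card (support a \<union> T) \<le> m"
  shows "norm (restr T (transpose Phi *v (Phi *v a))) \<le> 2 * e * norm a"
proof -
  define z where "z = restr T (transpose Phi *v (Phi *v a))"
  have sz: "support z \<subseteq> T" unfolding z_def by (rule support_restr_subset)
  then have "support a \<inter> support z = {}" using disj by blast
  have card_az: "card (support a \<union> support z) \<le> m"
    using card card_mono[of "support a \<union> T" "support a \<union> support z"] sz by force
  have "norm z * norm z = inner (Phi *v a) (Phi *v z)"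
    unfolding z_def power2_eq_square[symmetric] by (rule norm_restr_transpose_power2)
  also have "\<dots> \<le> 2 * e * norm a * norm z"
    using RIC_inner_disjoint_le[OF ric e \<open>support a \<inter> support z = {}\<close> card_az]
    by (simp add: abs_le_iff)
  also have "\<dots> = norm z * (2 * e * norm a)" by (simp only: mult_ac)
  finally have "norm z * norm z \<le> norm z * (2 * e * norm a)" .
  then have "norm z \<le> 2 * e * norm a" by (rule le_if_mult_self_le) (use e in simp)
  then show ?thesis unfolding z_def .
qed

lemma lsq_residual_gap_le:
  fixes Phi :: "real^'d^'N"
  assumes ric: "RIC Phi m e" and e: "0 \<le> e" "e \<le> 1"
    and lsq: "lsq_min Phi (Phi *v v) I y" and card: "card (I \<union> support v) \<le> m"
  shows "(1-e) * norm (Phi *v restr (support v - I) v - (Phi *v v - Phi *v y))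
           \<le> 2 * e * norm (restr (support v - I) v)"
proof -
  define v0 where "v0 = restr (support v - I) v"
  define y' where "y' = y - restr I v"
  define w where "w = Phi *v v0 - (Phi *v v - Phi *v y)"
  have "Phi *v v = Phi *v v0 + Phi *v restr I v"
    using arg_cong[OF restr_Diff_add_restr, of "(*v) Phi" v I]
    by (simp add: v0_def matrix_vector_right_distrib)
  then have w: "w = Phi *v y'"
    by (simp add: w_def y'_def matrix_vector_mult_diff_distrib)
  have sy': "support y' \<subseteq> I"
    using lsq support_diff_subset[of y "restr I v"] support_restr_subset[of I v]
    by (auto simp: y'_def lsq_min_def)
  have sv0: "support v0 \<subseteq> support v - I" unfolding v0_def by (rule support_restr_subset)
  have "norm w^2 = inner (Phi *v y') (Phi *v v0)"
    using lsq_min_residual_orthogonal[OF lsq sy']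
    by (simp add: power2_norm_eq_inner w_def w[symmetric] inner_diff_right inner_commute)
  also have "\<dots> \<le> 2 * e * norm y' * norm v0"
  proof -
    have "card (support y' \<union> support v0) \<le> m"
      using card card_mono[of "I \<union> support v" "support y' \<union> support v0"] sy' sv0 by force
    then show ?thesis
      using RIC_inner_disjoint_le[OF ric e, of y' v0] sy' sv0 by (auto simp: abs_le_iff)
  qed
  finally have w_sq: "norm w^2 \<le> 2 * e * norm y' * norm v0" .
  have "(1-e) * norm y' \<le> norm w"
    using ric sparse_if_support_subset[OF sy'] card card_mono[of "I \<union> support v" I]
    unfolding RIC_def w by force
  have "(1-e) * norm w * ((1-e) * norm w) = (1-e)^2 * norm w^2"
    by (simp add: power2_eq_square mult_ac)
  also have "\<dots> \<le> (1-e)^2 * (2 * e * norm y' * norm v0)"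
    by (rule mult_left_mono[OF w_sq]) simp
  also have "\<dots> = ((1-e) * norm y') * ((1-e) * (2 * e * norm v0))"
    by (simp add: power2_eq_square mult_ac)
  also have "\<dots> \<le> norm w * ((1-e) * (2 * e * norm v0))"
    by (rule mult_right_mono) (use \<open>(1-e) * norm y' \<le> norm w\<close> e in simp_all)
  also have "\<dots> = (1-e) * norm w * (2 * e * norm v0)" by (simp only: mult_ac)
  finally have "(1-e) * norm w \<le> 2 * e * norm v0"
    by (rule le_if_mult_self_le) (use e in simp)
  then show ?thesis by (simp only: w_def v0_def)
qed

lemma lsq_residual_consistency:
  fixes Phi :: "real^'d^'N"
  assumes ric: "RIC Phi m e" and e: "0 \<le> e" "e \<le> 0.0375"
    and lsq: "lsq_min Phi (Phi *v v) I y" and r: "r = Phi *v v - Phi *v y"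
    and card: "card (I \<union> support v) \<le> m" and T: "card T \<le> m"
  shows "norm (restr T (transpose Phi *v (Phi *v restr (support v - I) v) - transpose Phi *v r))
           \<le> 2.16 * e * norm (restr (support v - I) v)"
proof -
  define V where "V = norm (restr (support v - I) v)"
  define w where "w = Phi *v restr (support v - I) v - r"
  define X where "X = norm (restr T (transpose Phi *v w))"
  have "(1-e) * X \<le> (1-e) * ((1+e) * norm w)"
    using RIC_norm_restr_transpose_le[OF ric T e(1)] e by (simp add: X_def mult_left_mono)
  also have "\<dots> = (1+e) * ((1-e) * norm w)" by (simp only: mult_ac)
  also have "\<dots> \<le> (1+e) * (2 * e * V)"
    using lsq_residual_gap_le[OF ric e(1) _ lsq card] e
    by (simp add: r w_def V_def mult_left_mono)
  also have "\<dots> \<le> (1-e) * (2.16 * e * V)"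
  proof -
    have "(1-e) * (2.16 * e * V) - (1+e) * (2 * e * V) = (e * V) * (0.16 - 4.16 * e)"
      by (simp add: field_simps)
    moreover have "0 \<le> (e * V) * (0.16 - 4.16 * e)" using e by (simp add: V_def)
    ultimately show ?thesis by linarith
  qed
  finally have "X \<le> 2.16 * e * V" using e by (simp add: mult_le_cancel_left_pos)
  then show ?thesis
    by (simp add: X_def w_def V_def matrix_vector_mult_diff_distrib)
qed

subsection \<open>Identification and regularization\<close>

lemma identify_ok_sum_power2_ge:
  fixes u :: "real^'d"
  assumes idf: "identify_ok n u J" and S: "card S \<le> n"
  shows "(\<Sum>i\<in>S. (u$i)^2) \<le> (\<Sum>i\<in>J. (u$i)^2)"
proof -
  define f where "f i = (u$i)^2" for i
  have JS: "J \<subseteq> support u" and cJ: "card J = min n (card (support u))"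
    and big: "\<And>i j. i \<in> J \<Longrightarrow> j \<notin> J \<Longrightarrow> \<bar>u$j\<bar> \<le> \<bar>u$i\<bar>"
    using idf by (auto simp: identify_ok_def)
  have "sum f (S - J) \<le> sum f (J - S)"
  proof (cases "n \<le> card (support u)")
    case False
    then have "J = support u" using JS cJ by (simp add: card_subset_eq)
    then have "sum f (S - J) = 0" by (simp add: f_def support_def)
    then show ?thesis by (simp add: f_def sum_nonneg)
  next
    case True
    have "card S = card (S \<inter> J) + card (S - J)" "card J = card (S \<inter> J) + card (J - S)"
      using card_Int_Diff[of S J] card_Int_Diff[of J S] by (simp_all add: Int_commute)
    then have "card (S - J) \<le> card (J - S)" using S cJ True by simp
    then obtain g where g: "g ` (S - J) \<subseteq> J - S" "inj_on g (S - J)"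
      using card_le_inj[of "S - J" "J - S"] by auto
    have "sum f (S - J) \<le> sum (f \<circ> g) (S - J)"
      using g(1) big by (intro sum_mono) (auto simp: f_def abs_le_square_iff)
    also have "\<dots> = sum f (g ` (S - J))" using g(2) by (simp add: sum.reindex)
    also have "\<dots> \<le> sum f (J - S)" using g(1) by (intro sum_mono2) (auto simp: f_def)
    finally show ?thesis .
  qed
  moreover have "sum f S = sum f (S \<inter> J) + sum f (S - J)" "sum f J = sum f (S \<inter> J) + sum f (J - S)"
    using sum.Int_Diff[of S f J] sum.Int_Diff[of J f S] by (simp_all add: Int_commute)
  ultimately show ?thesis by (simp add: f_def)
qed

lemma sum_dyadic_levels:
  fixes a f :: "'a \<Rightarrow> real"
  assumes "finite J" and "\<And>i. i \<in> J \<Longrightarrow> a i \<le> m" and "0 \<le> m"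
  shows "sum f {i\<in>J. m/2^k < a i} = (\<Sum>l<k. sum f {i\<in>J. m/2^(l+1) < a i \<and> a i \<le> m/2^l})"
proof (induction k)
  case 0
  have "{i\<in>J. m/2^0 < a i} = {}" using assms(2) by force
  then show ?case by (simp only: sum.empty lessThan_0)
next
  case (Suc k)
  have "m/2^(Suc k) \<le> m/2^k" using assms(3) by (simp add: divide_left_mono)
  then have "{i\<in>J. m/2^(Suc k) < a i}
      = {i\<in>J. m/2^k < a i} \<union> {i\<in>J. m/2^(k+1) < a i \<and> a i \<le> m/2^k}"
    by auto
  then show ?case
    using Suc assms(1) by (simp add: sum.union_disjoint disjoint_iff not_less)
qed

lemma comparable_dyadic_level:
  "comparable u {i\<in>J. m/2^(l+1) < \<bar>u$i\<bar> \<and> \<bar>u$i\<bar> \<le> m/2^l}"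
proof -
  have "m/2^l = 2 * (m/2^(l+1))" by simp
  then show ?thesis unfolding comparable_def by auto
qed

lemma comparable_card_mult_sum_le:
  fixes u :: "real^'d"
  assumes comp: "comparable u A" and D: "D \<subseteq> A"
  shows "real (card D) * (\<Sum>i\<in>A. (u$i)^2) \<le> 4 * real (card A) * (\<Sum>i\<in>D. (u$i)^2)"
proof (cases "A = {}")
  case True
  then show ?thesis using D by simp
next
  case False
  define M where "M = Max ((\<lambda>i. \<bar>u$i\<bar>) ` A)"
  have "M \<in> (\<lambda>i. \<bar>u$i\<bar>) ` A" unfolding M_def using False by (intro Max_in) auto
  then obtain k where k: "k \<in> A" "\<bar>u$k\<bar> = M" by auto
  have sum_A: "(\<Sum>i\<in>A. (u$i)^2) \<le> real (card A) * M^2"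
  proof (intro sum_bounded_above)
    fix i assume "i \<in> A"
    then have "\<bar>u$i\<bar>^2 \<le> M^2" by (intro power_mono) (simp_all add: M_def)
    then show "(u$i)^2 \<le> M^2" by simp
  qed
  have sum_D: "real (card D) * (M/2)^2 \<le> (\<Sum>i\<in>D. (u$i)^2)"
  proof (intro sum_bounded_below)
    fix i assume "i \<in> D"
    then have "\<bar>M/2\<bar> \<le> \<bar>u$i\<bar>" using comp k D by (force simp: comparable_def)
    then show "(M/2)^2 \<le> (u$i)^2" using abs_le_square_iff by blast
  qed
  have "real (card D) * (\<Sum>i\<in>A. (u$i)^2) \<le> real (card D) * (real (card A) * M^2)"
    using sum_A by (rule mult_left_mono) simp
  also have "\<dots> = 4 * real (card A) * (real (card D) * (M/2)^2)"
    by (simp add: power_divide)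
  also have "\<dots> \<le> 4 * real (card A) * (\<Sum>i\<in>D. (u$i)^2)"
    using sum_D by (rule mult_left_mono) simp
  finally show ?thesis .
qed

lemma sum_power2_below_dyadic_threshold:
  fixes a :: "'a \<Rightarrow> real"
  assumes "finite J" and "card J \<le> n" and "real n \<le> 4^j"
  shows "(\<Sum>i\<in>{i\<in>J. \<bar>a i\<bar> \<le> m/2^(j+1)}. (a i)^2) \<le> m^2/4"
proof -
  define B where "B = {i\<in>J. \<bar>a i\<bar> \<le> m/2^(j+1)}"
  have "(\<Sum>i\<in>B. (a i)^2) \<le> real (card B) * (m/2^(j+1))^2"
  proof (intro sum_bounded_above)
    fix i assume "i \<in> B"
    then have "\<bar>a i\<bar>^2 \<le> (m/2^(j+1))^2" by (intro power_mono) (auto simp: B_def)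
    then show "(a i)^2 \<le> (m/2^(j+1))^2" by simp
  qed
  also have "\<dots> \<le> 4^j * (m/2^(j+1))^2"
  proof -
    have "card B \<le> n" using assms(1,2) card_mono[of J B] by (auto simp: B_def)
    then show ?thesis using assms(3) by (intro mult_right_mono) auto
  qed
  also have "\<dots> = m^2/4"
    by (simp add: power_divide power2_eq_square flip: power_mult_distrib)
  finally show ?thesis unfolding B_def .
qed

lemma exists_comparable_subset_sum_power2:
  fixes u :: "real^'d"
  assumes J: "card J \<le> n" and nj: "real n \<le> 4^j"
  shows "\<exists>A\<subseteq>J. comparable u A \<and> 3 * (\<Sum>i\<in>J. (u$i)^2) \<le> 4 * real (j+1) * (\<Sum>i\<in>A. (u$i)^2)"
proof (cases "J = {}")
  case True
  then show ?thesis by (intro exI[of _ "{}"]) (simp add: comparable_def)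
next
  case False
  define f where "f i = (u$i)^2" for i
  define m where "m = Max ((\<lambda>i. \<bar>u$i\<bar>) ` J)"
  define lev where "lev l = {i\<in>J. m/2^(l+1) < \<bar>u$i\<bar> \<and> \<bar>u$i\<bar> \<le> m/2^l}" for l
  define B where "B = {i\<in>J. m/2^(j+1) < \<bar>u$i\<bar>}"
  have le_m: "\<bar>u$i\<bar> \<le> m" if "i \<in> J" for i using that by (simp add: m_def)
  have "m \<in> (\<lambda>i. \<bar>u$i\<bar>) ` J" unfolding m_def using False by (intro Max_in) auto
  then obtain k where k: "k \<in> J" "\<bar>u$k\<bar> = m" by auto
  have "m^2 \<le> sum f J"
    using k member_le_sum[of k J f] by (simp add: f_def flip: k(2))
  moreover have "sum f J = sum f B + sum f (J - B)"
    by (simp add: B_def sum.subset_diff[of B J])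
  moreover have "J - B = {i\<in>J. \<bar>u$i\<bar> \<le> m/2^(j+1)}" by (auto simp: B_def)
  then have "sum f (J - B) \<le> m^2/4"
    using sum_power2_below_dyadic_threshold[OF _ J nj, of "\<lambda>i. u$i" m] by (simp add: f_def)
  moreover have "sum f B = (\<Sum>l<j+1. sum f (lev l))"
    unfolding B_def lev_def using k le_m by (intro sum_dyadic_levels) auto
  ultimately have "3 * sum f J \<le> 4 * (\<Sum>l<j+1. sum f (lev l))" by linarith
  moreover have "Max ((\<lambda>l. sum f (lev l)) ` {..<j+1}) \<in> (\<lambda>l. sum f (lev l)) ` {..<j+1}"
    by (intro Max_in) auto
  then obtain l where l: "l < j+1" "sum f (lev l) = Max ((\<lambda>l. sum f (lev l)) ` {..<j+1})"
    by auto
  then have "(\<Sum>l'<j+1. sum f (lev l')) \<le> real (card {..<j+1}) * sum f (lev l)"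
    by (intro sum_bounded_above) simp
  then have "(\<Sum>l'<j+1. sum f (lev l')) \<le> real (j+1) * sum f (lev l)" by simp
  ultimately have "3 * sum f J \<le> 4 * real (j+1) * sum f (lev l)" by linarith
  moreover have "lev l \<subseteq> J" by (auto simp: lev_def)
  ultimately show ?thesis
    using comparable_dyadic_level[of u J m l] unfolding f_def lev_def by blast
qed

subsection \<open>Numerical constants\<close>

lemma ln_ge_two_thirds: "2 \<le> n \<Longrightarrow> 2/3 \<le> ln (real n)"
  using ln2_ge_two_thirds ln_le_cancel_iff[of 2 "real n"] by linarith

lemma romp_eps_bounds:
  assumes "2 \<le> n" and "e = 0.03 / sqrt (ln (real n))"
  shows "0 < e" and "e \<le> 0.0375"
proof -
  define s where "s = sqrt (ln (real n))"
  have "sqrt (0.64::real) = 0.8" by (rule real_sqrt_unique) (simp_all add: power2_eq_square)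
  moreover have "sqrt 0.64 \<le> s"
    using ln_ge_two_thirds[OF assms(1)] unfolding s_def by (subst real_sqrt_le_iff) simp
  ultimately have "0.8 \<le> s" by linarith
  moreover have "e = 0.03 / s" using assms(2) by (simp add: s_def)
  ultimately show "0 < e" "e \<le> 0.0375" by (simp_all add: divide_le_eq)
qed

lemma exists_pow4_ge_log:
  assumes "1 \<le> n"
  shows "\<exists>j::nat. real n \<le> 4^j \<and> real j \<le> ln (real n) / ln 4 + 1"
proof -
  define j where "j = nat \<lceil>log 4 (real n)\<rceil>"
  have log_nonneg: "0 \<le> log 4 (real n)" using assms by simp
  have "real n = 4 powr log 4 (real n)" using assms by simp
  also have "\<dots> \<le> 4 powr real j"
    using log_nonneg by (intro powr_mono) (auto simp: j_def)
  also have "\<dots> = 4^j" by (simp add: powr_realpow)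
  finally have "real n \<le> 4^j" .
  moreover have "real j \<le> log 4 (real n) + 1" using log_nonneg by (simp add: j_def)
  ultimately show ?thesis by (intro exI[of _ j]) (simp add: log_def)
qed

text \<open>The number of dyadic levels \<open>j + 1\<close> used in regularization must be small enough to
  beat the constant \<open>4 \<cdot> 8 \<cdot> 4.16\<^sup>2\<close> in the proof of \<open>romp_step_mostly_correct\<close>.\<close>

lemma romp_depth_condition:
  assumes n: "2 \<le> n" and e: "e = 0.03 / sqrt (ln (real n))"
  shows "\<exists>j. real n \<le> 4^j \<and> 32 * 4.16^2 * e^2 * real (j+1) \<le> 3 * (1 - 4.16 * e)^2"
proof -
  define L where "L = ln (real n)"
  have L: "2/3 \<le> L" unfolding L_def using ln_ge_two_thirds[OF n] .
  obtain j where nj: "real n \<le> 4^j" and j: "real j \<le> L / ln 4 + 1"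
    using exists_pow4_ge_log[of n] n unfolding L_def by auto
  have "4/3 \<le> ln (4::real)"
    using ln2_ge_two_thirds ln_realpow[of 2 2] by simp
  then have "L / ln 4 \<le> 0.75 * L" using L by (simp add: divide_le_eq)
  then have j1: "real (j+1) \<le> 0.75 * L + 2" using j by linarith
  have e2: "e^2 = 0.0009 / L" using L by (simp add: e L_def power_divide)
  have "32 * 4.16^2 * e^2 * real (j+1) \<le> 32 * 4.16^2 * (0.0009 / L) * (0.75 * L + 2)"
    unfolding e2 using j1 L by (intro mult_left_mono) auto
  also have "\<dots> = 0.37380096 + 0.99680256 / L" using L by (simp add: field_simps)
  also have "\<dots> \<le> 0.37380096 + 0.99680256 / (2/3)"
    using L by (intro add_left_mono divide_left_mono) auto
  also have "\<dots> \<le> 3 * (1 - 4.16 * 0.0375)^2" by (simp add: power2_eq_square)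
  also have "\<dots> \<le> 3 * (1 - 4.16 * e)^2"
    using romp_eps_bounds[OF n e] by (intro mult_left_mono power_mono) auto
  finally show ?thesis using nj by blast
qed

subsection \<open>The ROMP invariant\<close>

lemma card_Un_le_double:
  assumes "finite I" "finite S" "card (I - S) \<le> card (I \<inter> S)" and "card S \<le> n"
  shows "card (I \<union> S) \<le> 2 * n"
proof -
  have "card (I \<union> S) = card S + card (I - S)"
    using assms(1,2) card_Un_disjoint[of S "I - S"] by (simp add: Un_commute)
  moreover have "card (I \<inter> S) \<le> card S" using assms(2) by (simp add: card_mono)
  ultimately show ?thesis using assms(3,4) by linarith
qed

lemma card_Diff_le_card_Int_Un:
  assumes "finite I" "finite K" "I \<inter> K = {}"
    and "card (I - S) \<le> card (I \<inter> S)" "card (K - S) \<le> card (K \<inter> S)"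
  shows "card ((I \<union> K) - S) \<le> card ((I \<union> K) \<inter> S)"
proof -
  have "card ((I \<union> K) - S) = card (I - S) + card (K - S)"
    using assms(1-3) card_Un_disjoint[of "I - S" "K - S"] by (auto simp: Un_Diff)
  moreover have "card ((I \<union> K) \<inter> S) = card (I \<inter> S) + card (K \<inter> S)"
    using assms(1-3) card_Un_disjoint[of "I \<inter> S" "K \<inter> S"] by (auto simp: Int_Un_distrib2)
  ultimately show ?thesis using assms(4,5) by linarith
qed

lemma identify_ok_disjoint_lsq:
  fixes Phi :: "real^'d^'N"
  assumes "identify_ok n (transpose Phi *v (x - Phi *v y)) J" and "lsq_min Phi x I y"
  shows "J \<inter> I = {}"
  using assms transpose_residual_eq_0 by (fastforce simp: identify_ok_def support_def)

lemma romp_localization: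
  fixes Phi :: "real^'d^'N"
  assumes ric: "RIC Phi (2*n) e" and e: "0 \<le> e" "e \<le> 0.0375"
    and v: "sparse n v" and lsq: "lsq_min Phi (Phi *v v) I y"
    and card: "card (I \<union> support v) \<le> 2*n"
    and idf: "identify_ok n (transpose Phi *v (Phi *v v - Phi *v y)) J"
  shows "(1 - 4.16*e) * norm (restr (support v - I) v)
           \<le> norm (restr J (transpose Phi *v (Phi *v v - Phi *v y)))"
proof -
  define S0 where "S0 = support v - I"
  define v0 where "v0 = restr S0 v"
  define V where "V = norm v0"
  define u where "u = transpose Phi *v (Phi *v v - Phi *v y)"
  define u0 where "u0 = transpose Phi *v (Phi *v v0)"
  have sv0: "support v0 \<subseteq> S0" unfolding v0_def by (rule support_restr_subset)
  have S0: "card S0 \<le> n" using v card_mono[of "support v" S0] by (auto simp: sparse_def S0_def)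
  have "(1-e)^2 * V^2 \<le> norm (Phi *v v0)^2"
    using RIC_power2_bounds(1)[OF ric sparse_if_support_subset[OF sv0] e(1)] S0 e(2)
    by (simp add: V_def)
  also have "\<dots> = inner u0 v0"
    unfolding u0_def power2_norm_eq_inner by (rule inner_transpose_mult_vec[symmetric])
  also have "\<dots> = inner (restr S0 u0) v0" by (rule inner_restr_left[OF sv0, symmetric])
  also have "\<dots> \<le> norm (restr S0 u0) * V" unfolding V_def by (rule norm_cauchy_schwarz)
  finally have "V * ((1-e)^2 * V) \<le> V * norm (restr S0 u0)"
    by (simp add: power2_eq_square mult_ac)
  then have "(1-e)^2 * V \<le> norm (restr S0 u0)"
    by (cases "V = 0") (auto simp: V_def)
  moreover have "norm (restr S0 u0) - norm (restr S0 u) \<le> 2.16 * e * V"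
    using norm_triangle_ineq2[of "restr S0 u0" "restr S0 u"]
      lsq_residual_consistency[OF ric e lsq refl card, of S0] S0
    by (simp add: u_def u0_def v0_def V_def S0_def restr_diff)
  moreover have "(1 - 4.16*e) * V \<le> (1-e)^2 * V - 2.16 * e * V"
    using e(1) by (simp add: V_def power2_eq_square algebra_simps)
  moreover have "norm (restr S0 u)^2 \<le> norm (restr J u)^2"
    using identify_ok_sum_power2_ge[OF idf S0] by (simp add: u_def norm_restr_power2)
  then have "norm (restr S0 u) \<le> norm (restr J u)" by (rule power2_le_imp_le) simp
  ultimately show ?thesis by (simp add: V_def v0_def S0_def u_def)
qed

lemma romp_unsupported_coordinates_small:
  fixes Phi :: "real^'d^'N"
  assumes ric: "RIC Phi (2*n) e" and e: "0 \<le> e" "e \<le> 0.0375"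
    and v: "sparse n v" and lsq: "lsq_min Phi (Phi *v v) I y"
    and card: "card (I \<union> support v) \<le> 2*n"
    and D: "D \<inter> support v = {}" "card D \<le> n"
  shows "norm (restr D (transpose Phi *v (Phi *v v - Phi *v y)))
           \<le> 4.16 * e * norm (restr (support v - I) v)"
proof -
  define v0 where "v0 = restr (support v - I) v"
  define u where "u = transpose Phi *v (Phi *v v - Phi *v y)"
  define u0 where "u0 = transpose Phi *v (Phi *v v0)"
  have sv0: "support v0 \<subseteq> support v" using support_restr_subset[of _ v] by (auto simp: v0_def)
  have "card (support v0 \<union> D) \<le> card (support v) + card D"
    using card_mono[of "support v \<union> D" "support v0 \<union> D"] card_Un_le[of "support v" D] sv0
    by force
  then have "norm (restr D u0) \<le> 2 * e * norm v0"
    using RIC_norm_restr_transpose_disjoint_le[OF ric e(1) _ _, of D v0] D sv0 v e(2)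
    by (force simp: u0_def sparse_def)
  moreover have "norm (restr D u0 - restr D u) \<le> 2.16 * e * norm v0"
    using lsq_residual_consistency[OF ric e lsq refl card, of D] D
    by (simp add: u_def u0_def v0_def restr_diff)
  ultimately show ?thesis
    using norm_triangle_ineq4[of "restr D u0" "restr D u0 - restr D u"]
    by (simp add: u_def v0_def algebra_simps)
qed

lemma romp_step_mostly_correct:
  fixes Phi :: "real^'d^'N"
  assumes ric: "RIC Phi (2*n) e" and e: "0 \<le> e" "e \<le> 0.0375"
    and v: "sparse n v" and lsq: "lsq_min Phi (Phi *v v) I y"
    and card: "card (I \<union> support v) \<le> 2*n"
    and nj: "real n \<le> 4^j" and depth: "32 * 4.16^2 * e^2 * real (j+1) \<le> 3 * (1 - 4.16*e)^2"
    and idf: "identify_ok n (transpose Phi *v (Phi *v v - Phi *v y)) J"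
    and reg: "regularize_ok (transpose Phi *v (Phi *v v - Phi *v y)) J J0"
  shows "card (J0 - support v) \<le> card (J0 \<inter> support v)"
proof (rule ccontr)
  define u where "u = transpose Phi *v (Phi *v v - Phi *v y)"
  define E where "E A = (\<Sum>i\<in>A. (u$i)^2)" for A
  define V where "V = norm (restr (support v - I) v)"
  define D where "D = J0 - support v"
  assume "\<not> ?thesis"
  then have D_big: "card J0 < 2 * card D"
    using card_Int_Diff[of J0 "support v"] by (simp add: D_def)
  have J: "J \<subseteq> support u" "card J \<le> n" using idf by (auto simp: identify_ok_def u_def)
  have J0: "J0 \<subseteq> J" "comparable u J0"
    and J0_opt: "\<And>A. A \<subseteq> J \<Longrightarrow> comparable u A \<Longrightarrow> norm (restr A u) \<le> norm (restr J0 u)"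
    using reg by (auto simp: regularize_ok_def u_def)
  have loc: "((1 - 4.16*e) * V)^2 \<le> E J"
    using romp_localization[OF ric e v lsq card idf] e
    by (simp add: E_def u_def V_def power_mono flip: norm_restr_power2)
  obtain A where A: "A \<subseteq> J" "comparable u A" "3 * E J \<le> 4 * real (j+1) * E A"
    using exists_comparable_subset_sum_power2[OF J(2) nj, of u] by (auto simp: E_def)
  have EA: "E A \<le> E J0"
    using J0_opt[OF A(1,2)] by (simp add: E_def power_mono flip: norm_restr_power2)
  have J0D: "E J0 < 8 * E D"
  proof -
    obtain d where "d \<in> D" using D_big by fastforce
    then have "0 < E D"
      using J0(1) J(1) by (auto simp: E_def D_def support_def intro!: sum_pos2)
    then have "4 * real (card J0) * E D < 8 * real (card D) * E D"
      using D_big by simp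
    then have "real (card D) * E J0 < real (card D) * (8 * E D)"
      using comparable_card_mult_sum_le[OF J0(2), of D] by (simp add: D_def E_def algebra_simps)
    then show ?thesis by (simp add: mult_less_cancel_left)
  qed
  have ED: "E D \<le> (4.16 * e * V)^2"
  proof -
    have "card D \<le> n" using J(2) J0(1) card_mono[of J0 D] card_mono[of J J0] by (auto simp: D_def)
    moreover have "D \<inter> support v = {}" by (auto simp: D_def)
    ultimately have "norm (restr D u) \<le> 4.16 * e * V"
      using romp_unsupported_coordinates_small[OF ric e v lsq card] by (simp add: u_def V_def)
    then show ?thesis unfolding E_def norm_restr_power2[symmetric] by (rule power_mono) simp
  qed
  \<comment> \<open>comparability puts a fixed share of the energy of \<open>J\<^sub>0\<close> on \<open>D\<close>, where \<open>u\<close> is pure error\<close>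
  note A(3)
  also have "4 * real (j+1) * E A \<le> 4 * real (j+1) * E J0" by (rule mult_left_mono[OF EA]) simp
  also have "\<dots> < 4 * real (j+1) * (8 * E D)" by (rule mult_strict_left_mono[OF J0D]) simp
  also have "\<dots> \<le> 4 * real (j+1) * (8 * (4.16 * e * V)^2)" using ED by simp
  also have "\<dots> = (32 * 4.16^2 * e^2 * real (j+1)) * V^2"
    by (simp add: power2_eq_square algebra_simps)
  also have "\<dots> \<le> 3 * (1 - 4.16*e)^2 * V^2" by (rule mult_right_mono[OF depth]) simp
  also have "\<dots> = 3 * ((1 - 4.16*e) * V)^2" by (simp only: power_mult_distrib mult_ac)
  finally show False using loc by simp
qed

lemma romp_reach_invariant:
  fixes Phi :: "real^'d^'N"
  assumes n: "2 \<le> n" and e: "e = 0.03 / sqrt (ln (real n))"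
    and ric: "RIC Phi (2*n) e" and v: "sparse n v"
    and reach: "romp_reach Phi n (Phi *v v) s"
  shows "\<exists>y. lsq_min Phi (Phi *v v) (fst s) y \<and> snd s = Phi *v v - Phi *v y \<and>
           card (fst s - support v) \<le> card (fst s \<inter> support v)"
  using reach
proof (induction rule: romp_reach.induct)
  case init
  show ?case using lsq_min_empty by (intro exI[of _ 0]) simp
next
  case (step s s')
  obtain I r where s: "s = (I, r)" by fastforce
  from step.IH obtain y where lsq: "lsq_min Phi (Phi *v v) I y"
    and r: "r = Phi *v v - Phi *v y" and mostly: "card (I - support v) \<le> card (I \<inter> support v)"
    by (auto simp: s)
  from step.hyps(2) obtain J J0 y' where
    idf: "identify_ok n (transpose Phi *v r) J" and reg: "regularize_ok (transpose Phi *v r) J J0"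
    and s': "fst s' = I \<union> J0" "lsq_min Phi (Phi *v v) (fst s') y'" "snd s' = Phi *v v - Phi *v y'"
    unfolding romp_step_def Let_def s by auto
  obtain j where "real n \<le> 4^j" "32 * 4.16^2 * e^2 * real (j+1) \<le> 3 * (1 - 4.16*e)^2"
    using romp_depth_condition[OF n e] by blast
  moreover have "card (I \<union> support v) \<le> 2*n"
    using card_Un_le_double[OF _ _ mostly] v by (simp add: sparse_def)
  moreover have "0 \<le> e" "e \<le> 0.0375" using romp_eps_bounds[OF n e] by simp_all
  ultimately have "card (J0 - support v) \<le> card (J0 \<inter> support v)"
    using romp_step_mostly_correct[OF ric _ _ v lsq] idf reg r by simp
  moreover have "I \<inter> J0 = {}"
    using identify_ok_disjoint_lsq[OF idf[unfolded r] lsq] reg by (auto simp: regularize_ok_def)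
  ultimately show ?case
    using card_Diff_le_card_Int_Un[OF _ _ _ mostly] s' by auto
qed

theorem lemma3p5:
  fixes Phi :: "real^'d^'N" and v :: "real^'d" and n :: nat
    and I :: "'d set" and r :: "real^'N" and T :: "'d set" and eps :: real
  assumes n2: "n \<ge> 2"
    and eps_def: "eps = 0.03 / sqrt (ln (real n))"
    and ric: "RIC Phi (2 * n) eps"
    and v_nz: "v \<noteq> 0" and v_sparse: "sparse n v"
    and iter: "romp_reach Phi n (Phi *v v) (I, r)"
    and r_nz: "r \<noteq> 0"
    and T_card: "card T \<le> 2 * n"
  shows "norm (restr T (transpose Phi *v (Phi *v restr (support v - I) v) - transpose Phi *v r))
           \<le> 2.4 * eps * norm (restr (support v - I) v)"
proof -
  obtain y where lsq: "lsq_min Phi (Phi *v v) I y" and r: "r = Phi *v v - Phi *v y"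
    and mostly: "card (I - support v) \<le> card (I \<inter> support v)"
    using romp_reach_invariant[OF n2 eps_def ric v_sparse iter] by auto
  have card: "card (I \<union> support v) \<le> 2 * n"
    using card_Un_le_double[OF _ _ mostly] v_sparse by (simp add: sparse_def)
  have eps: "0 < eps" "eps \<le> 0.0375" using romp_eps_bounds[OF n2 eps_def] by simp_all
  have "norm (restr T (transpose Phi *v (Phi *v restr (support v - I) v) - transpose Phi *v r))
          \<le> 2.16 * eps * norm (restr (support v - I) v)"
    using lsq_residual_consistency[OF ric _ eps(2) lsq r card T_card] eps(1) by simp
  also have "\<dots> \<le> 2.4 * eps * norm (restr (support v - I) v)"
    using eps(1) by (intro mult_right_mono) auto
  finally show ?thesis .
qed

end
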